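(* Let $\mathbb{K}\in\{\mathbb{R},\mathbb{C}\}$, $A\in\mathbb{K}^{n\times n}$, and let $Q_1,Q_2\in\mathbb{K}^{n\times n}$ be unitary (orthogonal if $\mathbb{K}=\mathbb{R}$). Let $(Q_1A^{*}Q_2A)^{1/2}$ denote a square root of $Q_1A^{*}Q_2A$. Then $$|\lambda_{\max}((Q_1A^{*}Q_2A)^{1/2})|\le\sigma_{\max}(A),\qquad |\lambda_{\min}((Q_1A^{*}Q_2A)^{1/2})|\ge\sigma_{\min}(A).$$
   Context: $\cdot^{*}$ denotes the conjugate transpose (transpose if $\mathbb{K}=\mathbb{R}$). For a square matrix $B$, $\lambda_{\max}(B)$ and $\lambda_{\min}(B)$ denote eigenvalues of $B$ of largest and smallest modulus, respectively; $\sigma_{\max}(A)$, $\sigma_{\min}(A)$ denote the largest and smallest singular values of $A$. *)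

theory Defs
  imports "Jordan_Normal_Form.Spectral_Radius" "Jordan_Normal_Form.Schur_Decomposition"
begin

text \<open>Unitary (for real scalars: orthogonal) n x n matrices; mat_adjoint is the
  conjugate transpose (plain transpose over the reals).\<close>
definition unitary_mat :: "nat \<Rightarrow> 'a :: conjugatable_field mat \<Rightarrow> bool" where
  "unitary_mat n U \<longleftrightarrow> U \<in> carrier_mat n n \<and>
     mat_adjoint U * U = 1\<^sub>m n \<and> U * mat_adjoint U = 1\<^sub>m n"

definition lambda_max_abs :: "complex mat \<Rightarrow> real" where
  "lambda_max_abs B = Max (cmod ` spectrum B)"

definition lambda_min_abs :: "complex mat \<Rightarrow> real" where
  "lambda_min_abs B = Min (cmod ` spectrum B)"

definition singular_values :: "complex mat \<Rightarrow> real set" where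
  "singular_values A = (\<lambda>x. sqrt (Re x)) ` spectrum (mat_adjoint A * A)"

definition sigma_max :: "complex mat \<Rightarrow> real" where
  "sigma_max A = Max (singular_values A)"

definition sigma_min :: "complex mat \<Rightarrow> real" where
  "sigma_min A = Min (singular_values A)"

definition cmat :: "real mat \<Rightarrow> complex mat" where
  "cmat M = map_mat complex_of_real M"

end

theory Submission
  imports Defs "HOL-Analysis.Convex"
begin

(* If B v = m v with v nonzero, then m^2 v = Q1 A^* Q2 A v.  Unitary matrices preserve norms, so
   |m|^4 |v|^2 = |A^* (Q2 A v)|^2, and both A and A^* scale squared norms by a factor between
   sigma_min(A)^2 and sigma_max(A)^2, because A^* A and A A^* have the same spectrum.

   These Rayleigh bounds are derived without the spectral theorem.  For a Hermitian H the sequence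
   |H^k x|^2 is log-convex (Cauchy-Schwarz), so it grows at least geometrically with ratio
   |H x|^2 / |x|^2; on the other hand the Jordan normal form bounds all powers of H / s when s
   exceeds the spectral radius.  Hence |H x| <= rho(H) |x|, which applied to A^* A and to
   rho(A^* A) I - A^* A yields the upper and the lower bound.  The real case follows by
   complexification. *)

lemma mat_adjoint_dim [simp]:
  "dim_row (mat_adjoint A) = dim_col A" "dim_col (mat_adjoint A) = dim_row A"
  by (simp_all add: mat_adjoint_def)

lemma mat_adjoint_carrier [simp]: "A \<in> carrier_mat n m \<Longrightarrow> mat_adjoint A \<in> carrier_mat m n"
  by auto

lemma mat_adjoint_index [simp]:
  "i < dim_col A \<Longrightarrow> j < dim_row A \<Longrightarrow> mat_adjoint A $$ (i, j) = conjugate (A $$ (j, i))"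
  by (simp add: mat_adjoint_def mat_of_rows_def)

lemma mat_adjoint_adjoint: "mat_adjoint (mat_adjoint A) = A"
  by (rule eq_matI) auto

lemma mat_adjoint_mult:
  assumes "A \<in> carrier_mat n k" and "B \<in> carrier_mat k m"
  shows "mat_adjoint (A * B) = mat_adjoint B * mat_adjoint A"
  using assms
  by (intro eq_matI)
    (auto simp: scalar_prod_def sum_conjugate conjugate_dist_mul mult.commute intro!: sum.cong)

lemma mat_adjoint_smult:
  "A \<in> carrier_mat n m \<Longrightarrow> mat_adjoint (c \<cdot>\<^sub>m A) = conjugate c \<cdot>\<^sub>m mat_adjoint A"
  by (intro eq_matI) (auto simp: conjugate_dist_mul)

lemma conjugate_diff: "conjugate (a - b) = conjugate a - conjugate (b :: 'a :: conjugatable_ring)"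
  by (metis conjugate_dist_add conjugate_neg diff_conv_add_uminus)

lemma mat_adjoint_scalar_minus:
  assumes "A \<in> carrier_mat n n"
  shows "mat_adjoint (c \<cdot>\<^sub>m 1\<^sub>m n - A) = conjugate c \<cdot>\<^sub>m 1\<^sub>m n - mat_adjoint A"
  using assms by (intro eq_matI) (auto simp: conjugate_diff)

lemma smult_mat_mult_vec:
  "A \<in> carrier_mat n m \<Longrightarrow> v \<in> carrier_vec m \<Longrightarrow> (c \<cdot>\<^sub>m A) *\<^sub>v v = c \<cdot>\<^sub>v (A *\<^sub>v v)"
  by (intro eq_vecI) (auto simp: scalar_prod_def sum_distrib_left algebra_simps)

lemma scalar_minus_mult_vec:
  fixes A :: "'a :: comm_ring_1 mat"
  assumes A: "A \<in> carrier_mat n n" and v: "v \<in> carrier_vec n"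
  shows "(c \<cdot>\<^sub>m 1\<^sub>m n - A) *\<^sub>v v = c \<cdot>\<^sub>v v - A *\<^sub>v v"
proof -
  have "(c \<cdot>\<^sub>m 1\<^sub>m n - A) *\<^sub>v v = (c \<cdot>\<^sub>m 1\<^sub>m n) *\<^sub>v v - A *\<^sub>v v"
    using A v by (intro minus_mult_distrib_mat_vec) auto
  then show ?thesis
    using v by (simp add: smult_mat_mult_vec[OF one_carrier_mat])
qed

lemma pow_mat_Suc_left: "A \<in> carrier_mat n n \<Longrightarrow> A ^\<^sub>m Suc k = A * A ^\<^sub>m k"
proof (induction k)
  case (Suc k)
  then have "A ^\<^sub>m Suc (Suc k) = (A * A ^\<^sub>m k) * A"
    by simp
  also have "\<dots> = A * A ^\<^sub>m Suc k"
    using Suc.prems by (simp add: assoc_mult_mat[of _ n n _ n _ n])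
  finally show ?case .
qed simp

lemma pow_mat_Suc_mult_vec:
  assumes A: "A \<in> carrier_mat n n" and v: "v \<in> carrier_vec n"
  shows "(A ^\<^sub>m Suc k) *\<^sub>v v = A *\<^sub>v ((A ^\<^sub>m k) *\<^sub>v v)"
proof -
  have "(A ^\<^sub>m Suc k) *\<^sub>v v = (A * A ^\<^sub>m k) *\<^sub>v v"
    by (simp only: pow_mat_Suc_left[OF A])
  also have "\<dots> = A *\<^sub>v ((A ^\<^sub>m k) *\<^sub>v v)"
    using A v by (intro assoc_mult_mat_vec) auto
  finally show ?thesis .
qed

definition cinner :: "complex vec \<Rightarrow> complex vec \<Rightarrow> complex" where
  "cinner u v = (\<Sum>i<dim_vec v. cnj (u $ i) * v $ i)"

definition sq_norm_vec :: "complex vec \<Rightarrow> real" where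
  "sq_norm_vec v = (\<Sum>i<dim_vec v. (cmod (v $ i))\<^sup>2)"

lemma cinner_mat_adjoint:
  assumes A: "A \<in> carrier_mat n m" and u: "u \<in> carrier_vec m" and v: "v \<in> carrier_vec n"
  shows "cinner (A *\<^sub>v u) v = cinner u (mat_adjoint A *\<^sub>v v)"
proof -
  have "cinner (A *\<^sub>v u) v = (\<Sum>i<n. \<Sum>j<m. cnj (A $$ (i, j)) * cnj (u $ j) * v $ i)"
    using A u v by (auto simp: cinner_def scalar_prod_def sum_distrib_right atLeast0LessThan
        intro!: sum.cong)
  also have "\<dots> = (\<Sum>j<m. \<Sum>i<n. cnj (A $$ (i, j)) * cnj (u $ j) * v $ i)"
    by (rule sum.swap)
  also have "\<dots> = cinner u (mat_adjoint A *\<^sub>v v)"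
    using A u v by (auto simp: cinner_def scalar_prod_def sum_distrib_left atLeast0LessThan
        intro!: sum.cong)
  finally show ?thesis .
qed

lemma cinner_self: "cinner v v = of_real (sq_norm_vec v)"
  unfolding cinner_def sq_norm_vec_def of_real_sum
  by (intro sum.cong refl) (metis complex_norm_square mult.commute)

lemma cinner_diff_right:
  "u \<in> carrier_vec n \<Longrightarrow> v \<in> carrier_vec n \<Longrightarrow> w \<in> carrier_vec n \<Longrightarrow>
    cinner u (v - w) = cinner u v - cinner u w"
  by (simp add: cinner_def algebra_simps sum_subtractf)

lemma cinner_smult_right: "cinner u (c \<cdot>\<^sub>v v) = c * cinner u v"
  by (simp add: cinner_def sum_distrib_left algebra_simps)

lemma cinner_Cauchy_Schwarz:
  assumes "dim_vec u = dim_vec v"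
  shows "(cmod (cinner u v))\<^sup>2 \<le> sq_norm_vec u * sq_norm_vec v"
proof -
  have "cmod (cinner u v) \<le> (\<Sum>i<dim_vec v. cmod (u $ i) * cmod (v $ i))"
    unfolding cinner_def by (rule order_trans[OF norm_sum]) (simp add: norm_mult)
  then have "(cmod (cinner u v))\<^sup>2 \<le> (\<Sum>i<dim_vec v. cmod (u $ i) * cmod (v $ i))\<^sup>2"
    by (simp add: power_mono)
  also have "\<dots> \<le> sq_norm_vec u * sq_norm_vec v"
    unfolding sq_norm_vec_def assms by (rule Cauchy_Schwarz_ineq_sum)
  finally show ?thesis .
qed

lemma sq_norm_vec_nonneg: "0 \<le> sq_norm_vec v"
  by (simp add: sq_norm_vec_def sum_nonneg)

lemma sq_norm_vec_eq_0_iff: "v \<in> carrier_vec n \<Longrightarrow> sq_norm_vec v = 0 \<longleftrightarrow> v = 0\<^sub>v n"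
  by (auto simp: sq_norm_vec_def sum_nonneg_eq_0_iff intro!: eq_vecI)

lemma sq_norm_vec_pos: "v \<in> carrier_vec n \<Longrightarrow> v \<noteq> 0\<^sub>v n \<Longrightarrow> 0 < sq_norm_vec v"
  using sq_norm_vec_eq_0_iff sq_norm_vec_nonneg by (metis order_le_less)

lemma sq_norm_vec_smult: "sq_norm_vec (c \<cdot>\<^sub>v v) = (cmod c)\<^sup>2 * sq_norm_vec v"
  by (simp add: sq_norm_vec_def norm_mult power_mult_distrib sum_distrib_left)

lemma sq_norm_vec_norm_bound:
  assumes M: "M \<in> carrier_mat n m" and bound: "norm_bound M c" and x: "x \<in> carrier_vec m"
  shows "sq_norm_vec (M *\<^sub>v x) \<le> real n * (c * (\<Sum>j<m. cmod (x $ j)))\<^sup>2"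
proof -
  have entry: "cmod ((M *\<^sub>v x) $ i) \<le> c * (\<Sum>j<m. cmod (x $ j))" if "i < n" for i
  proof -
    have "cmod ((M *\<^sub>v x) $ i) \<le> (\<Sum>j<m. cmod (M $$ (i, j)) * cmod (x $ j))"
      using M x that
      by (auto simp: scalar_prod_def atLeast0LessThan norm_mult intro!: order_trans[OF norm_sum])
    also have "\<dots> \<le> (\<Sum>j<m. c * cmod (x $ j))"
      using bound M that unfolding norm_bound_def by (intro sum_mono mult_right_mono) auto
    finally show ?thesis
      by (simp add: sum_distrib_left)
  qed
  have "sq_norm_vec (M *\<^sub>v x) = (\<Sum>i<n. (cmod ((M *\<^sub>v x) $ i))\<^sup>2)"
    using M by (simp add: sq_norm_vec_def)
  also have "\<dots> \<le> (\<Sum>i<n. (c * (\<Sum>j<m. cmod (x $ j)))\<^sup>2)"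
    by (intro sum_mono power_mono entry) auto
  finally show ?thesis
    by simp
qed

lemma smult_nonzero_vec_eq_0:
  fixes v :: "'a :: field vec"
  assumes "v \<in> carrier_vec n" and "v \<noteq> 0\<^sub>v n" and "c \<cdot>\<^sub>v v = 0\<^sub>v n"
  shows "c = 0"
proof -
  obtain i where "i < n" "v $ i \<noteq> 0"
    using assms(1,2) by (metis carrier_vecD eq_vecI index_zero_vec(1,2))
  moreover have "c * v $ i = 0"
    using arg_cong[OF assms(3), of "\<lambda>w. w $ i"] \<open>i < n\<close> assms(1) by simp
  ultimately show ?thesis
    by simp
qed

lemma eigenvalue_scalar_minus:
  fixes A :: "'a :: comm_ring_1 mat"
  assumes A: "A \<in> carrier_mat n n" and ev: "eigenvalue (c \<cdot>\<^sub>m 1\<^sub>m n - A) \<mu>"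
  shows "eigenvalue A (c - \<mu>)"
proof -
  obtain v where v: "v \<in> carrier_vec n" "v \<noteq> 0\<^sub>v n"
    and "(c \<cdot>\<^sub>m 1\<^sub>m n - A) *\<^sub>v v = \<mu> \<cdot>\<^sub>v v"
    using ev A unfolding eigenvalue_def eigenvector_def by auto
  then have eq: "c \<cdot>\<^sub>v v - A *\<^sub>v v = \<mu> \<cdot>\<^sub>v v"
    by (simp only: scalar_minus_mult_vec[OF A v(1)])
  have "A *\<^sub>v v = (c - \<mu>) \<cdot>\<^sub>v v"
  proof (rule eq_vecI)
    fix i
    assume "i < dim_vec ((c - \<mu>) \<cdot>\<^sub>v v)"
    then have i: "i < n"
      using v by simp
    have "(c \<cdot>\<^sub>v v - A *\<^sub>v v) $ i = (\<mu> \<cdot>\<^sub>v v) $ i"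
      by (simp only: eq)
    then show "(A *\<^sub>v v) $ i = ((c - \<mu>) \<cdot>\<^sub>v v) $ i"
      using A v i by (simp add: algebra_simps)
  qed (use A v in simp)
  then show ?thesis
    using A v unfolding eigenvalue_def eigenvector_def by auto
qed

lemma spectrum_mult_commute_subset:
  fixes A B :: "'a :: field mat"
  assumes A: "A \<in> carrier_mat n n" and B: "B \<in> carrier_mat n n"
  shows "spectrum (A * B) \<subseteq> spectrum (B * A)"
proof
  fix l
  assume "l \<in> spectrum (A * B)"
  then obtain v where v: "v \<in> carrier_vec n" "v \<noteq> 0\<^sub>v n" and ev: "A *\<^sub>v (B *\<^sub>v v) = l \<cdot>\<^sub>v v"
    using A B by (auto simp: spectrum_def eigenvalue_def eigenvector_def)
  have Bv: "B *\<^sub>v v \<in> carrier_vec n"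
    using B v(1) by (rule mult_mat_vec_carrier)
  show "l \<in> spectrum (B * A)"
  proof (cases "B *\<^sub>v v = 0\<^sub>v n")
    case False
    have "(B * A) *\<^sub>v (B *\<^sub>v v) = B *\<^sub>v (A *\<^sub>v (B *\<^sub>v v))"
      using A B Bv by (intro assoc_mult_mat_vec) auto
    also have "\<dots> = l \<cdot>\<^sub>v (B *\<^sub>v v)"
      unfolding ev by (rule mult_mat_vec[OF B v(1)])
    finally have "eigenvector (B * A) (B *\<^sub>v v) l"
      using B Bv False unfolding eigenvector_def by simp
    then show ?thesis
      unfolding spectrum_def eigenvalue_def by blast
  next
    case True
    have "l \<cdot>\<^sub>v v = 0\<^sub>v n"
      using A unfolding ev[symmetric] True by (intro eq_vecI) (auto simp: scalar_prod_def)
    then have "l = 0"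
      by (rule smult_nonzero_vec_eq_0[OF v])
    have "det B = 0"
      using det_0_iff_vec_prod_zero[OF B] v True by auto
    then have "det (B * A) = 0"
      by (simp add: det_mult[OF B A])
    then obtain u where "u \<in> carrier_vec n" "u \<noteq> 0\<^sub>v n" "(B * A) *\<^sub>v u = 0\<^sub>v n"
      using det_0_iff_vec_prod_zero[OF mult_carrier_mat[OF B A]] by auto
    then have "eigenvector (B * A) u 0"
      using B unfolding eigenvector_def by (auto intro!: eq_vecI)
    then show ?thesis
      unfolding spectrum_def eigenvalue_def \<open>l = 0\<close> by blast
  qed
qed

lemma spectral_radius_nonneg:
  assumes "A \<in> carrier_mat n n" and "0 < n"
  shows "0 \<le> spectral_radius A"
  using spectral_radius_mem_max(1)[OF assms] by auto

lemma spectral_radius_smult_le: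
  assumes A: "A \<in> carrier_mat n n" and n: "0 < n" and c: "c \<noteq> 0"
  shows "spectral_radius (c \<cdot>\<^sub>m A) \<le> cmod c * spectral_radius A"
proof -
  have cA: "c \<cdot>\<^sub>m A \<in> carrier_mat n n"
    using A by simp
  obtain \<mu> where \<mu>: "\<mu> \<in> spectrum (c \<cdot>\<^sub>m A)" "spectral_radius (c \<cdot>\<^sub>m A) = cmod \<mu>"
    using spectral_radius_mem_max(1)[OF cA n] by auto
  then obtain v where "eigenvector (c \<cdot>\<^sub>m A) v \<mu>"
    by (auto simp: spectrum_def eigenvalue_def)
  then have v: "v \<in> carrier_vec n" "v \<noteq> 0\<^sub>v n" and cv: "c \<cdot>\<^sub>v (A *\<^sub>v v) = \<mu> \<cdot>\<^sub>v v"
    using cA smult_mat_mult_vec[OF A] unfolding eigenvector_def by auto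
  have "A *\<^sub>v v = (inverse c * c) \<cdot>\<^sub>v (A *\<^sub>v v)"
    using c by simp
  also have "\<dots> = inverse c \<cdot>\<^sub>v (\<mu> \<cdot>\<^sub>v v)"
    by (simp flip: cv add: smult_smult_assoc)
  also have "\<dots> = (\<mu> / c) \<cdot>\<^sub>v v"
    by (simp add: smult_smult_assoc field_simps)
  finally have "eigenvector A v (\<mu> / c)"
    using A v unfolding eigenvector_def by simp
  then have "\<mu> / c \<in> spectrum A"
    unfolding spectrum_def eigenvalue_def by blast
  then have "cmod (\<mu> / c) \<le> spectral_radius A"
    using spectral_radius_mem_max(2)[OF A n] by blast
  then show ?thesis
    using c \<mu>(2) by (simp add: norm_divide pos_divide_le_eq mult.commute)
qed

lemma log_convex_ratio_le:
  fixes a :: "nat \<Rightarrow> real"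
  assumes nonneg: "\<And>k. 0 \<le> a k"
    and log_convex: "\<And>k. (a (Suc k))\<^sup>2 \<le> a k * a (Suc (Suc k))"
    and pos: "0 < a 0"
  shows "a 1 / a 0 * a k \<le> a (Suc k)"
proof (induction k)
  case 0
  show ?case
    using pos by simp
next
  case (Suc k)
  show ?case
  proof (cases "a k = 0")
    case True
    then have "a (Suc k) = 0"
      using log_convex[of k] by simp
    then show ?thesis
      using nonneg by simp
  next
    case False
    have "a k * (a 1 / a 0 * a (Suc k)) = a (Suc k) * (a 1 / a 0 * a k)"
      by simp
    also have "\<dots> \<le> (a (Suc k))\<^sup>2"
      unfolding power2_eq_square by (rule mult_left_mono[OF Suc.IH nonneg])
    also have "\<dots> \<le> a k * a (Suc (Suc k))"
      by (rule log_convex)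
    finally have "a k * (a 1 / a 0 * a (Suc k)) \<le> a k * a (Suc (Suc k))" .
    moreover have "0 < a k"
      using False nonneg[of k] by linarith
    ultimately show ?thesis
      by (rule mult_left_le_imp_le)
  qed
qed

lemma log_convex_ge_geometric:
  fixes a :: "nat \<Rightarrow> real"
  assumes nonneg: "\<And>k. 0 \<le> a k"
    and "\<And>k. (a (Suc k))\<^sup>2 \<le> a k * a (Suc (Suc k))"
    and pos: "0 < a 0"
  shows "(a 1 / a 0) ^ k * a 0 \<le> a k"
proof (induction k)
  case (Suc k)
  have "(a 1 / a 0) ^ Suc k * a 0 = a 1 / a 0 * ((a 1 / a 0) ^ k * a 0)"
    by simp
  also have "\<dots> \<le> a 1 / a 0 * a k"
    using Suc.IH nonneg pos by (intro mult_left_mono) simp_all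
  also have "\<dots> \<le> a (Suc k)"
    using assms by (rule log_convex_ratio_le)
  finally show ?case .
qed simp

lemma hermitian_orbit_log_convex:
  assumes G: "G \<in> carrier_mat n n" and herm: "mat_adjoint G = G" and x: "x \<in> carrier_vec n"
  shows "(sq_norm_vec ((G ^\<^sub>m Suc k) *\<^sub>v x))\<^sup>2
    \<le> sq_norm_vec ((G ^\<^sub>m k) *\<^sub>v x) * sq_norm_vec ((G ^\<^sub>m Suc (Suc k)) *\<^sub>v x)"
proof -
  note step = pow_mat_Suc_mult_vec[OF G x]
  define y where "y = (G ^\<^sub>m k) *\<^sub>v x"
  have y: "y \<in> carrier_vec n"
    unfolding y_def using pow_carrier_mat[OF G] x by (rule mult_mat_vec_carrier)
  have Gy: "G *\<^sub>v y \<in> carrier_vec n"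
    using G y by simp
  have "of_real (sq_norm_vec ((G ^\<^sub>m Suc k) *\<^sub>v x)) = cinner (G *\<^sub>v y) (G *\<^sub>v y)"
    unfolding step y_def cinner_self ..
  also have "\<dots> = cinner y (G *\<^sub>v (G *\<^sub>v y))"
    using cinner_mat_adjoint[OF G y Gy] unfolding herm .
  also have "\<dots> = cinner y ((G ^\<^sub>m Suc (Suc k)) *\<^sub>v x)"
    unfolding step y_def ..
  finally have "(sq_norm_vec ((G ^\<^sub>m Suc k) *\<^sub>v x))\<^sup>2
      = (cmod (cinner y ((G ^\<^sub>m Suc (Suc k)) *\<^sub>v x)))\<^sup>2"
    by (metis norm_of_real power2_abs)
  also have "\<dots> \<le> sq_norm_vec y * sq_norm_vec ((G ^\<^sub>m Suc (Suc k)) *\<^sub>v x)"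
    using G by (intro cinner_Cauchy_Schwarz) (simp add: y_def)
  finally show ?thesis
    unfolding y_def .
qed

lemma spectral_radius_less_1_bounded_orbit:
  assumes G: "G \<in> carrier_mat n n" and radius: "spectral_radius G < 1" and x: "x \<in> carrier_vec n"
  obtains K where "\<And>k. sq_norm_vec ((G ^\<^sub>m k) *\<^sub>v x) \<le> K"
proof -
  obtain c where "\<And>k. norm_bound (G ^\<^sub>m k) c"
    using spectral_radius_jnf_norm_bound_less_1_upper_triangular[OF G radius] by auto
  then show ?thesis
    using sq_norm_vec_norm_bound[OF pow_carrier_mat[OF G] _ x] that by blast
qed

lemma hermitian_contraction:
  assumes G: "G \<in> carrier_mat n n" and herm: "mat_adjoint G = G"
    and radius: "spectral_radius G < 1" and x: "x \<in> carrier_vec n"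
  shows "sq_norm_vec (G *\<^sub>v x) \<le> sq_norm_vec x"
proof (cases "x = 0\<^sub>v n")
  case True
  then show ?thesis
    using G by (simp add: sq_norm_vec_def)
next
  case False
  define a where "a k = sq_norm_vec ((G ^\<^sub>m k) *\<^sub>v x)" for k
  have a0: "a 0 = sq_norm_vec x" and a1: "a 1 = sq_norm_vec (G *\<^sub>v x)"
    using G x by (simp_all add: a_def)
  have pos: "0 < a 0"
    using a0 sq_norm_vec_pos[OF x False] by simp
  have growth: "(a 1 / a 0) ^ k * a 0 \<le> a k" for k
  proof (rule log_convex_ge_geometric)
    show "0 \<le> a j" for j
      by (simp add: a_def sq_norm_vec_nonneg)
    show "(a (Suc j))\<^sup>2 \<le> a j * a (Suc (Suc j))" for j
      unfolding a_def by (rule hermitian_orbit_log_convex[OF G herm x])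
  qed (rule pos)
  obtain K where bounded: "\<And>k. a k \<le> K"
    using spectral_radius_less_1_bounded_orbit[OF G radius x] unfolding a_def by blast
  have "a 1 / a 0 \<le> 1"
  proof (rule ccontr)
    assume "\<not> a 1 / a 0 \<le> 1"
    then obtain k where "K / a 0 < (a 1 / a 0) ^ k"
      using real_arch_pow by (metis not_le)
    then have "K < (a 1 / a 0) ^ k * a 0"
      using pos by (simp add: pos_divide_less_eq)
    with growth[of k] bounded[of k] show False
      by simp
  qed
  then have "a 1 \<le> a 0"
    using pos by (simp add: divide_le_eq_1)
  then show ?thesis
    by (simp only: a0 a1)
qed

lemma hermitian_sq_norm_mult_vec_le:
  assumes H: "H \<in> carrier_mat n n" and herm: "mat_adjoint H = H" and n: "0 < n"
    and x: "x \<in> carrier_vec n"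
  shows "sq_norm_vec (H *\<^sub>v x) \<le> (spectral_radius H)\<^sup>2 * sq_norm_vec x"
proof -
  let ?\<rho> = "spectral_radius H"
  have scaled: "sq_norm_vec (H *\<^sub>v x) \<le> s\<^sup>2 * sq_norm_vec x" if s: "?\<rho> < s" for s
  proof -
    have s_pos: "0 < s"
      using s spectral_radius_nonneg[OF H n] by linarith
    define G where "G = complex_of_real (1 / s) \<cdot>\<^sub>m H"
    have G: "G \<in> carrier_mat n n"
      using H by (simp add: G_def)
    have "mat_adjoint G = G"
      unfolding G_def mat_adjoint_smult[OF H] herm by simp
    moreover have "spectral_radius G < 1"
    proof -
      have "spectral_radius G \<le> ?\<rho> / s"
        using spectral_radius_smult_le[OF H n, of "complex_of_real (1 / s)"] s_pos
        by (simp add: G_def norm_divide)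
      also have "\<dots> < 1"
        using s s_pos by simp
      finally show ?thesis .
    qed
    ultimately have "sq_norm_vec (G *\<^sub>v x) \<le> sq_norm_vec x"
      by (rule hermitian_contraction[OF G _ _ x])
    moreover have "sq_norm_vec (G *\<^sub>v x) = sq_norm_vec (H *\<^sub>v x) / s\<^sup>2"
      unfolding G_def smult_mat_mult_vec[OF H x] sq_norm_vec_smult
      using s_pos by (simp add: norm_divide power_divide)
    ultimately show ?thesis
      using s_pos by (simp add: divide_le_eq mult.commute)
  qed
  have "(\<lambda>k. (?\<rho> + inverse (real (Suc k)))\<^sup>2 * sq_norm_vec x) \<longlonglongrightarrow> (?\<rho> + 0)\<^sup>2 * sq_norm_vec x"
    by (intro tendsto_intros LIMSEQ_inverse_real_of_nat)
  then have "(\<lambda>k. (?\<rho> + inverse (real (Suc k)))\<^sup>2 * sq_norm_vec x) \<longlonglongrightarrow> ?\<rho>\<^sup>2 * sq_norm_vec x"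
    by simp
  then show ?thesis
    by (rule LIMSEQ_le_const) (intro exI[of _ 0] allI impI scaled, simp)
qed

lemma hermitian_quadratic_form_le:
  assumes H: "H \<in> carrier_mat n n" and herm: "mat_adjoint H = H" and n: "0 < n"
    and x: "x \<in> carrier_vec n"
  shows "cmod (cinner x (H *\<^sub>v x)) \<le> spectral_radius H * sq_norm_vec x"
proof -
  have "(cmod (cinner x (H *\<^sub>v x)))\<^sup>2 \<le> sq_norm_vec x * sq_norm_vec (H *\<^sub>v x)"
    using H x by (intro cinner_Cauchy_Schwarz) simp
  also have "\<dots> \<le> sq_norm_vec x * ((spectral_radius H)\<^sup>2 * sq_norm_vec x)"
    using hermitian_sq_norm_mult_vec_le[OF assms] sq_norm_vec_nonneg by (rule mult_left_mono)
  also have "\<dots> = (spectral_radius H * sq_norm_vec x)\<^sup>2"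
    by (simp add: power2_eq_square)
  finally have "(cmod (cinner x (H *\<^sub>v x)))\<^sup>2 \<le> (spectral_radius H * sq_norm_vec x)\<^sup>2" .
  moreover have "0 \<le> spectral_radius H * sq_norm_vec x"
    using spectral_radius_nonneg[OF H n] sq_norm_vec_nonneg by simp
  ultimately show ?thesis
    by (rule power2_le_imp_le)
qed

lemma adjoint_mult_self_carrier [simp]:
  "C \<in> carrier_mat n m \<Longrightarrow> mat_adjoint C * C \<in> carrier_mat m m"
  by (metis mat_adjoint_carrier mult_carrier_mat)

lemma hermitian_adjoint_mult_self:
  assumes "C \<in> carrier_mat n m"
  shows "mat_adjoint (mat_adjoint C * C) = mat_adjoint C * C"
proof -
  have "mat_adjoint (mat_adjoint C * C) = mat_adjoint C * mat_adjoint (mat_adjoint C)"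
    using assms by (intro mat_adjoint_mult) auto
  then show ?thesis
    by (simp only: mat_adjoint_adjoint)
qed

lemma cinner_adjoint_mult_self:
  assumes C: "C \<in> carrier_mat n m" and x: "x \<in> carrier_vec m"
  shows "cinner x ((mat_adjoint C * C) *\<^sub>v x) = of_real (sq_norm_vec (C *\<^sub>v x))"
proof -
  have Cx: "C *\<^sub>v x \<in> carrier_vec n"
    using C x by (rule mult_mat_vec_carrier)
  have "cinner x ((mat_adjoint C * C) *\<^sub>v x) = cinner x (mat_adjoint C *\<^sub>v (C *\<^sub>v x))"
    using C x by (subst assoc_mult_mat_vec) auto
  also have "\<dots> = cinner (C *\<^sub>v x) (C *\<^sub>v x)"
    by (rule cinner_mat_adjoint[OF C x Cx, symmetric])
  finally show ?thesis
    by (simp only: cinner_self)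
qed

lemma spectrum_adjoint_mult_self_nonneg:
  assumes C: "C \<in> carrier_mat n m" and l: "l \<in> spectrum (mat_adjoint C * C)"
  shows "l = of_real (Re l) \<and> 0 \<le> Re l"
proof -
  have H: "mat_adjoint C * C \<in> carrier_mat m m"
    using C by (rule adjoint_mult_self_carrier)
  obtain v where "eigenvector (mat_adjoint C * C) v l"
    using l by (auto simp: spectrum_def eigenvalue_def)
  then have v: "v \<in> carrier_vec m" "v \<noteq> 0\<^sub>v m" and ev: "(mat_adjoint C * C) *\<^sub>v v = l \<cdot>\<^sub>v v"
    using H unfolding eigenvector_def by auto
  have "of_real (sq_norm_vec (C *\<^sub>v v)) = l * of_real (sq_norm_vec v)"
    using cinner_adjoint_mult_self[OF C v(1)] by (simp add: ev cinner_smult_right cinner_self)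
  then have "l = of_real (sq_norm_vec (C *\<^sub>v v) / sq_norm_vec v)"
    using sq_norm_vec_pos[OF v(1,2)] by (simp add: field_simps)
  then show ?thesis
    by (simp add: sq_norm_vec_nonneg)
qed

lemma sq_norm_mult_vec_le_spectral_radius:
  assumes C: "C \<in> carrier_mat n m" and m: "0 < m" and x: "x \<in> carrier_vec m"
  shows "sq_norm_vec (C *\<^sub>v x) \<le> spectral_radius (mat_adjoint C * C) * sq_norm_vec x"
  using hermitian_quadratic_form_le[OF adjoint_mult_self_carrier[OF C]
      hermitian_adjoint_mult_self[OF C] m x]
  unfolding cinner_adjoint_mult_self[OF C x] norm_of_real
  by (simp add: sq_norm_vec_nonneg)

lemma spectral_radius_shifted_gram_le:
  assumes C: "C \<in> carrier_mat n m" and m: "0 < m"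
    and lower: "\<And>l. l \<in> spectrum (mat_adjoint C * C) \<Longrightarrow> a \<le> Re l"
  defines "b \<equiv> spectral_radius (mat_adjoint C * C)"
  shows "spectral_radius (complex_of_real b \<cdot>\<^sub>m 1\<^sub>m m - mat_adjoint C * C) \<le> b - a"
proof -
  define H where "H = mat_adjoint C * C"
  have H: "H \<in> carrier_mat m m" and H': "complex_of_real b \<cdot>\<^sub>m 1\<^sub>m m - H \<in> carrier_mat m m"
    using C by (auto simp: H_def)
  obtain \<mu> where \<mu>: "\<mu> \<in> spectrum (complex_of_real b \<cdot>\<^sub>m 1\<^sub>m m - H)"
    and radius: "spectral_radius (complex_of_real b \<cdot>\<^sub>m 1\<^sub>m m - H) = cmod \<mu>"
    using spectral_radius_mem_max(1)[OF H' m] by auto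
  then have ev: "complex_of_real b - \<mu> \<in> spectrum H"
    using eigenvalue_scalar_minus[OF H] unfolding spectrum_def by simp
  define r where "r = Re (complex_of_real b - \<mu>)"
  have r: "complex_of_real b - \<mu> = of_real r" "0 \<le> r"
    using spectrum_adjoint_mult_self_nonneg[OF C ev[unfolded H_def]] by (simp_all add: r_def)
  have "cmod (complex_of_real b - \<mu>) \<le> b"
    using spectral_radius_mem_max(2)[OF H m] ev unfolding b_def H_def by blast
  then have "r \<le> b"
    using r by simp
  moreover have "a \<le> r"
    using lower[OF ev[unfolded H_def]] by (simp add: r_def)
  moreover have "\<mu> = of_real (b - r)"
    using r(1) by (simp add: algebra_simps)
  then have "cmod \<mu> = b - r"
    using \<open>r \<le> b\<close> by (simp only: norm_of_real abs_of_nonneg diff_ge_0_iff_ge)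
  ultimately show ?thesis
    using radius unfolding H_def by simp
qed

lemma sq_norm_mult_vec_ge:
  assumes C: "C \<in> carrier_mat n m" and m: "0 < m" and x: "x \<in> carrier_vec m"
    and lower: "\<And>l. l \<in> spectrum (mat_adjoint C * C) \<Longrightarrow> a \<le> Re l"
  shows "a * sq_norm_vec x \<le> sq_norm_vec (C *\<^sub>v x)"
proof -
  define H where "H = mat_adjoint C * C"
  define b where "b = spectral_radius H"
  define H' where "H' = complex_of_real b \<cdot>\<^sub>m 1\<^sub>m m - H"
  have H: "H \<in> carrier_mat m m" and H': "H' \<in> carrier_mat m m"
    using C by (auto simp: H_def H'_def)
  have herm': "mat_adjoint H' = H'"
    unfolding H'_def mat_adjoint_scalar_minus[OF H]
    using hermitian_adjoint_mult_self[OF C] by (simp add: H_def)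
  have quadratic_form: "cinner x (H' *\<^sub>v x) = of_real (b * sq_norm_vec x - sq_norm_vec (C *\<^sub>v x))"
    using H x
    by (simp add: H'_def H_def scalar_minus_mult_vec cinner_diff_right cinner_smult_right
        cinner_self cinner_adjoint_mult_self[OF C x])
  have "b * sq_norm_vec x - sq_norm_vec (C *\<^sub>v x) \<le> cmod (cinner x (H' *\<^sub>v x))"
    unfolding quadratic_form norm_of_real by (rule abs_ge_self)
  also have "\<dots> \<le> spectral_radius H' * sq_norm_vec x"
    by (rule hermitian_quadratic_form_le[OF H' herm' m x])
  also have "\<dots> \<le> (b - a) * sq_norm_vec x"
    using spectral_radius_shifted_gram_le[OF C m lower] sq_norm_vec_nonneg
    unfolding H'_def H_def b_def by (rule mult_right_mono)
  finally show ?thesis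
    by (simp add: algebra_simps)
qed

lemma singular_values_finite: "C \<in> carrier_mat n m \<Longrightarrow> finite (singular_values C)"
  unfolding singular_values_def
  by (intro finite_imageI card_finite_spectrum(1)[OF adjoint_mult_self_carrier])

lemma singular_values_nonneg: "C \<in> carrier_mat n m \<Longrightarrow> s \<in> singular_values C \<Longrightarrow> 0 \<le> s"
  unfolding singular_values_def using spectrum_adjoint_mult_self_nonneg by auto

lemma sigma_bounds_spectrum:
  assumes C: "C \<in> carrier_mat n m" and l: "l \<in> spectrum (mat_adjoint C * C)"
  shows "(sigma_min C)\<^sup>2 \<le> Re l" and "Re l \<le> (sigma_max C)\<^sup>2"
proof -
  have fin: "finite (singular_values C)"
    using C by (rule singular_values_finite)
  have s: "sqrt (Re l) \<in> singular_values C"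
    using l by (simp add: singular_values_def)
  have Re: "0 \<le> Re l"
    using spectrum_adjoint_mult_self_nonneg[OF C l] by simp
  have "sigma_min C \<in> singular_values C"
    unfolding sigma_min_def using fin s by (intro Min_in) auto
  then have "0 \<le> sigma_min C"
    by (rule singular_values_nonneg[OF C])
  moreover have "sigma_min C \<le> sqrt (Re l)"
    unfolding sigma_min_def using fin s by simp
  ultimately show "(sigma_min C)\<^sup>2 \<le> Re l"
    using Re power_mono[of "sigma_min C" "sqrt (Re l)" 2] by simp
  have "sqrt (Re l) \<le> sigma_max C"
    unfolding sigma_max_def using fin s by simp
  then show "Re l \<le> (sigma_max C)\<^sup>2"
    using Re power_mono[of "sqrt (Re l)" "sigma_max C" 2] by simp
qed

lemma sigma_max_nonneg:
  assumes C: "C \<in> carrier_mat n m" and m: "0 < m"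
  shows "0 \<le> sigma_max C"
proof -
  have "singular_values C \<noteq> {}"
    using spectrum_non_empty[OF adjoint_mult_self_carrier[OF C] m]
    by (simp add: singular_values_def)
  then have "sigma_max C \<in> singular_values C"
    unfolding sigma_max_def using singular_values_finite[OF C] by (intro Max_in)
  then show ?thesis
    by (rule singular_values_nonneg[OF C])
qed

lemma sq_norm_mult_vec_sigma_bounds:
  assumes C: "C \<in> carrier_mat n m" and m: "0 < m" and x: "x \<in> carrier_vec m"
  shows "(sigma_min C)\<^sup>2 * sq_norm_vec x \<le> sq_norm_vec (C *\<^sub>v x)"
    and "sq_norm_vec (C *\<^sub>v x) \<le> (sigma_max C)\<^sup>2 * sq_norm_vec x"
proof -
  show "(sigma_min C)\<^sup>2 * sq_norm_vec x \<le> sq_norm_vec (C *\<^sub>v x)"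
    using sq_norm_mult_vec_ge[OF C m x] sigma_bounds_spectrum(1)[OF C] by blast
  obtain l where l: "l \<in> spectrum (mat_adjoint C * C)"
    and radius: "spectral_radius (mat_adjoint C * C) = cmod l"
    using spectral_radius_mem_max(1)[OF adjoint_mult_self_carrier[OF C] m] by auto
  have "cmod l = Re l"
    using spectrum_adjoint_mult_self_nonneg[OF C l] by (metis abs_of_nonneg norm_of_real)
  then have "spectral_radius (mat_adjoint C * C) \<le> (sigma_max C)\<^sup>2"
    using radius sigma_bounds_spectrum(2)[OF C l] by simp
  then show "sq_norm_vec (C *\<^sub>v x) \<le> (sigma_max C)\<^sup>2 * sq_norm_vec x"
    using sq_norm_mult_vec_le_spectral_radius[OF C m x] sq_norm_vec_nonneg[of x]
    by (meson mult_right_mono order_trans)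
qed

lemma singular_values_adjoint:
  assumes "A \<in> carrier_mat n n"
  shows "singular_values (mat_adjoint A) = singular_values A"
proof -
  have "spectrum (A * mat_adjoint A) = spectrum (mat_adjoint A * A)"
    using assms by (intro equalityI spectrum_mult_commute_subset) auto
  then show ?thesis
    by (simp add: singular_values_def mat_adjoint_adjoint)
qed

lemma sigma_adjoint:
  assumes "A \<in> carrier_mat n n"
  shows "sigma_min (mat_adjoint A) = sigma_min A" and "sigma_max (mat_adjoint A) = sigma_max A"
  using singular_values_adjoint[OF assms] by (simp_all add: sigma_min_def sigma_max_def)

lemma sq_norm_unitary:
  assumes Q: "unitary_mat n Q" and x: "x \<in> carrier_vec n"
  shows "sq_norm_vec (Q *\<^sub>v x) = sq_norm_vec x"
proof -
  have Qc: "Q \<in> carrier_mat n n" and QQ: "mat_adjoint Q * Q = 1\<^sub>m n"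
    using Q unfolding unitary_mat_def by auto
  have "of_real (sq_norm_vec (Q *\<^sub>v x)) = cinner x ((mat_adjoint Q * Q) *\<^sub>v x)"
    by (rule cinner_adjoint_mult_self[OF Qc x, symmetric])
  also have "\<dots> = of_real (sq_norm_vec x)"
    unfolding QQ using x by (simp add: cinner_self)
  finally show ?thesis
    by simp
qed

lemma sq_norm_root_eigenvector:
  assumes A: "A \<in> carrier_mat n n" and Q1: "unitary_mat n Q1" and Q2: "Q2 \<in> carrier_mat n n"
    and B: "B \<in> carrier_mat n n" and root: "B * B = Q1 * mat_adjoint A * Q2 * A"
    and v: "v \<in> carrier_vec n" and ev: "B *\<^sub>v v = m \<cdot>\<^sub>v v"
  shows "(cmod m)^4 * sq_norm_vec v = sq_norm_vec (mat_adjoint A *\<^sub>v (Q2 *\<^sub>v (A *\<^sub>v v)))"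
proof -
  have Q1c: "Q1 \<in> carrier_mat n n"
    using Q1 unfolding unitary_mat_def by auto
  have Av: "A *\<^sub>v v \<in> carrier_vec n" and y: "Q2 *\<^sub>v (A *\<^sub>v v) \<in> carrier_vec n"
    using A Q2 v by simp_all
  have P1: "Q1 * mat_adjoint A \<in> carrier_mat n n"
    using Q1c mat_adjoint_carrier[OF A] by (rule mult_carrier_mat)
  have P2: "Q1 * mat_adjoint A * Q2 \<in> carrier_mat n n"
    using P1 Q2 by (rule mult_carrier_mat)
  have "(m * m) \<cdot>\<^sub>v v = B *\<^sub>v (B *\<^sub>v v)"
    by (simp add: ev mult_mat_vec[OF B v] smult_smult_assoc)
  also have "\<dots> = (Q1 * mat_adjoint A * Q2 * A) *\<^sub>v v"
    unfolding root[symmetric] using B v by (intro assoc_mult_mat_vec[symmetric]) auto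
  also have "\<dots> = Q1 *\<^sub>v (mat_adjoint A *\<^sub>v (Q2 *\<^sub>v (A *\<^sub>v v)))"
    by (simp only: assoc_mult_mat_vec[OF P2 A v] assoc_mult_mat_vec[OF P1 Q2 Av]
        assoc_mult_mat_vec[OF Q1c mat_adjoint_carrier[OF A] y])
  finally have eigen_root: "(m * m) \<cdot>\<^sub>v v = Q1 *\<^sub>v (mat_adjoint A *\<^sub>v (Q2 *\<^sub>v (A *\<^sub>v v)))" .
  have "(cmod m)^4 * sq_norm_vec v = sq_norm_vec ((m * m) \<cdot>\<^sub>v v)"
    by (simp add: sq_norm_vec_smult norm_mult power2_eq_square power4_eq_xxxx)
  also have "\<dots> = sq_norm_vec (mat_adjoint A *\<^sub>v (Q2 *\<^sub>v (A *\<^sub>v v)))"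
    unfolding eigen_root by (rule sq_norm_unitary[OF Q1 mult_mat_vec_carrier[OF mat_adjoint_carrier[OF A] y]])
  finally show ?thesis .
qed

lemma cmod_spectrum_root_bounds:
  assumes n: "0 < n" and A: "A \<in> carrier_mat n n"
    and Q1: "unitary_mat n Q1" and Q2: "unitary_mat n Q2" and B: "B \<in> carrier_mat n n"
    and root: "B * B = Q1 * mat_adjoint A * Q2 * A" and m: "m \<in> spectrum B"
  shows "sigma_min A \<le> cmod m \<and> cmod m \<le> sigma_max A"
proof -
  have Q2c: "Q2 \<in> carrier_mat n n"
    using Q2 unfolding unitary_mat_def by auto
  obtain v where "eigenvector B v m"
    using m unfolding spectrum_def eigenvalue_def by blast
  then have v: "v \<in> carrier_vec n" "v \<noteq> 0\<^sub>v n" and ev: "B *\<^sub>v v = m \<cdot>\<^sub>v v"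
    using B unfolding eigenvector_def by auto
  define y where "y = Q2 *\<^sub>v (A *\<^sub>v v)"
  have y: "y \<in> carrier_vec n"
    using A Q2c v(1) by (simp add: y_def)
  have "(cmod m)^4 * sq_norm_vec v = sq_norm_vec (mat_adjoint A *\<^sub>v y)"
    unfolding y_def by (rule sq_norm_root_eigenvector[OF A Q1 Q2c B root v(1) ev])
  moreover have "sq_norm_vec y = sq_norm_vec (A *\<^sub>v v)"
    unfolding y_def using A v(1) by (intro sq_norm_unitary[OF Q2]) simp
  moreover note sq_norm_mult_vec_sigma_bounds[OF A n v(1)]
  moreover note sq_norm_mult_vec_sigma_bounds[OF mat_adjoint_carrier[OF A] n y,
      unfolded sigma_adjoint[OF A]]
  ultimately have "(sigma_min A)\<^sup>2 * ((sigma_min A)\<^sup>2 * sq_norm_vec v) \<le> (cmod m)^4 * sq_norm_vec v"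
    and "(cmod m)^4 * sq_norm_vec v \<le> (sigma_max A)\<^sup>2 * ((sigma_max A)\<^sup>2 * sq_norm_vec v)"
    by (smt (verit) mult_left_mono zero_le_power2)+
  then have lower: "(sigma_min A)^4 \<le> (cmod m)^4" and upper: "(cmod m)^4 \<le> (sigma_max A)^4"
    using sq_norm_vec_pos[OF v(1,2)] by (simp_all add: power4_eq_xxxx power2_eq_square ac_simps)
  have "sigma_min A \<le> cmod m"
    using lower by (metis not_le norm_ge_zero power_strict_mono zero_less_numeral)
  moreover have "cmod m \<le> sigma_max A"
    using upper sigma_max_nonneg[OF A n]
    by (metis not_le power_strict_mono zero_less_numeral)
  ultimately show ?thesis ..
qed

lemma spectrum_root_bounds:
  assumes n: "0 < n" and A: "A \<in> carrier_mat n n"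
    and Q1: "unitary_mat n Q1" and Q2: "unitary_mat n Q2" and B: "B \<in> carrier_mat n n"
    and root: "B * B = Q1 * mat_adjoint A * Q2 * A"
  shows "lambda_max_abs B \<le> sigma_max A \<and> lambda_min_abs B \<ge> sigma_min A"
proof -
  have "finite (cmod ` spectrum B)" and "cmod ` spectrum B \<noteq> {}"
    using card_finite_spectrum(1)[OF B] spectrum_non_empty[OF B n] by auto
  then show ?thesis
    using cmod_spectrum_root_bounds[OF assms]
    by (auto simp: lambda_max_abs_def lambda_min_abs_def)
qed

lemma cmat_carrier [simp]: "A \<in> carrier_mat n m \<Longrightarrow> cmat A \<in> carrier_mat n m"
  by (simp add: cmat_def)

lemma cmat_mult: "A \<in> carrier_mat n k \<Longrightarrow> B \<in> carrier_mat k m \<Longrightarrow> cmat (A * B) = cmat A * cmat B"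
  unfolding cmat_def by (rule of_real_hom.mat_hom_mult)

lemma mat_adjoint_cmat: "mat_adjoint (cmat A) = cmat (transpose_mat A)"
  by (intro eq_matI) (auto simp: cmat_def)

lemma mat_adjoint_real: "mat_adjoint (A :: real mat) = transpose_mat A"
  by (intro eq_matI) auto

lemma unitary_cmat:
  assumes "unitary_mat n Q"
  shows "unitary_mat n (cmat Q)"
proof -
  have Q: "Q \<in> carrier_mat n n" and "transpose_mat Q * Q = 1\<^sub>m n" "Q * transpose_mat Q = 1\<^sub>m n"
    using assms unfolding unitary_mat_def mat_adjoint_real by auto
  moreover have "cmat (1\<^sub>m n) = 1\<^sub>m n"
    by (intro eq_matI) (auto simp: cmat_def)
  ultimately show ?thesis
    unfolding unitary_mat_def mat_adjoint_cmat
    using cmat_mult[of "transpose_mat Q" n n Q n] cmat_mult[of Q n n "transpose_mat Q" n] by auto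
qed

lemma cmat_transpose_product:
  assumes A: "A \<in> carrier_mat n n" and Q1: "Q1 \<in> carrier_mat n n" and Q2: "Q2 \<in> carrier_mat n n"
  shows "cmat (Q1 * transpose_mat A * Q2 * A) = cmat Q1 * mat_adjoint (cmat A) * cmat Q2 * cmat A"
proof -
  have At: "transpose_mat A \<in> carrier_mat n n"
    using A by simp
  have P1: "Q1 * transpose_mat A \<in> carrier_mat n n"
    using Q1 At by (rule mult_carrier_mat)
  have P2: "Q1 * transpose_mat A * Q2 \<in> carrier_mat n n"
    using P1 Q2 by (rule mult_carrier_mat)
  show ?thesis
    unfolding cmat_mult[OF P2 A] cmat_mult[OF P1 Q2] cmat_mult[OF Q1 At] mat_adjoint_cmat ..
qed

lemma real_spectrum_root_bounds:
  fixes A :: "real mat"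
  assumes n: "0 < n" and A: "A \<in> carrier_mat n n"
    and Q1: "unitary_mat n Q1" and Q2: "unitary_mat n Q2" and B: "B \<in> carrier_mat n n"
    and root: "B * B = Q1 * transpose_mat A * Q2 * A"
  shows "lambda_max_abs (cmat B) \<le> sigma_max (cmat A) \<and> lambda_min_abs (cmat B) \<ge> sigma_min (cmat A)"
proof (rule spectrum_root_bounds[OF n cmat_carrier[OF A] unitary_cmat[OF Q1] unitary_cmat[OF Q2]
      cmat_carrier[OF B]])
  have "Q1 \<in> carrier_mat n n" and "Q2 \<in> carrier_mat n n"
    using Q1 Q2 unfolding unitary_mat_def by auto
  then show "cmat B * cmat B = cmat Q1 * mat_adjoint (cmat A) * cmat Q2 * cmat A"
    unfolding cmat_mult[OF B B, symmetric] root by (rule cmat_transpose_product[OF A])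
qed

theorem mainTheorem2:
  shows
  "(\<forall>(n::nat) (A::complex mat) Q1 Q2 B.
      n > 0 \<longrightarrow> A \<in> carrier_mat n n \<longrightarrow> unitary_mat n Q1 \<longrightarrow> unitary_mat n Q2 \<longrightarrow>
      B \<in> carrier_mat n n \<longrightarrow> B * B = Q1 * mat_adjoint A * Q2 * A \<longrightarrow>
      lambda_max_abs B \<le> sigma_max A \<and> lambda_min_abs B \<ge> sigma_min A)
   \<and>
   (\<forall>(n::nat) (A::real mat) Q1 Q2 B.
      n > 0 \<longrightarrow> A \<in> carrier_mat n n \<longrightarrow> unitary_mat n Q1 \<longrightarrow> unitary_mat n Q2 \<longrightarrow>
      B \<in> carrier_mat n n \<longrightarrow> B * B = Q1 * transpose_mat A * Q2 * A \<longrightarrow>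
      lambda_max_abs (cmat B) \<le> sigma_max (cmat A) \<and>
      lambda_min_abs (cmat B) \<ge> sigma_min (cmat A))"
proof (intro conjI allI impI)
  fix n and A :: "complex mat" and Q1 Q2 B
  assume "n > 0" "A \<in> carrier_mat n n" "unitary_mat n Q1" "unitary_mat n Q2"
    "B \<in> carrier_mat n n" "B * B = Q1 * mat_adjoint A * Q2 * A"
  from spectrum_root_bounds[OF this]
  show "lambda_max_abs B \<le> sigma_max A" and "lambda_min_abs B \<ge> sigma_min A"
    by auto
next
  fix n and A :: "real mat" and Q1 Q2 B
  assume "n > 0" "A \<in> carrier_mat n n" "unitary_mat n Q1" "unitary_mat n Q2"
    "B \<in> carrier_mat n n" "B * B = Q1 * transpose_mat A * Q2 * A"
  from real_spectrum_root_bounds[OF this]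
  show "lambda_max_abs (cmat B) \<le> sigma_max (cmat A)"
    and "lambda_min_abs (cmat B) \<ge> sigma_min (cmat A)"
    by auto
qed

end
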